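(* Under the standing setting and assumptions (A1)–(A3) described in the context, assume that the acceptance set $\mathcal A$ is polyhedral. Then the optimal payoff map $\mathcal R$ is lower semicontinuous at every $X\in\mathcal X$.
   Context: Let $\mathcal X$ be a Hausdorff, first countable, locally convex topological vector space over $\mathbb R$ with topological dual $\mathcal X'$, partially ordered by a partial order $\geq$ with positive cone $\mathcal X_+=\{X\in\mathcal X: X\geq 0\}$. Let $\mathcal M\subset\mathcal X$ be a vector subspace with $1<\dim\mathcal M<\infty$, carrying the relative topology, and let $\pi:\mathcal M\to\mathbb R$ be linear. Standing assumptions: (A1) there is $U\in\mathcal M\cap\mathcal X_+$ with $\pi(U)=1$; (A2) $\mathcal A\subsetneq\mathcal X$ is closed, contains $0$, and satisfies $\mathcal A+\mathcal X_+\subset\mathcal A$; (A3) the map $\rho:\mathcal X\to[-\infty,\infty]$, $\rho(X)=\inf\{\pi(Z): Z\in\mathcal M,\ X+Z\in\mathcal A\}$, is finitely valued and continuous. The optimal payoff map $\mathcal R:\mathcal X\rightrightarrows\mathcal M$ is $\mathcal R(X)=\{Z\in\mathcal M: X+Z\in\mathcal A,\ \pi(Z)=\rho(X)\}$. A set is polyhedral if it is a finite intersection of sets $\{X\in\mathcal X:\varphi(X)\geq\alpha\}$ with $\varphi\in\mathcal X'$, $\alpha\in\mathbb R$. $\mathcal R$ is lower semicontinuous at $X$ if for every open $\mathcal U\subset\mathcal M$ with $\mathcal R(X)\cap\mathcal U\neq\emptyset$ there is an open neighborhood $\mathcal U_X$ of $X$ in $\mathcal X$ such that $\mathcal R(Y)\cap\mathcal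 U\neq\emptyset$ for all $Y\in\mathcal U_X$. *)

theory Defs
  imports "HOL-Analysis.Analysis"
begin

definition locally_convex_tvs :: "('a::{real_vector,topological_space}) itself \<Rightarrow> bool" where
  "locally_convex_tvs _ \<longleftrightarrow>
     continuous_on UNIV (\<lambda>p::'a \<times> 'a. fst p + snd p) \<and>
     continuous_on UNIV (\<lambda>p::real \<times> 'a. fst p *\<^sub>R snd p) \<and>
     (\<forall>W::'a set. open W \<and> 0 \<in> W \<longrightarrow> (\<exists>V. open V \<and> convex V \<and> 0 \<in> V \<and> V \<subseteq> W))"

definition vector_partial_order :: "('a::real_vector \<Rightarrow> 'a \<Rightarrow> bool) \<Rightarrow> bool" where
  "vector_partial_order geq \<longleftrightarrow>
     (\<forall>x. geq x x) \<and>
     (\<forall>x y. geq x y \<and> geq y x \<longrightarrow> x = y) \<and>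
     (\<forall>x y z. geq x y \<and> geq y z \<longrightarrow> geq x z) \<and>
     (\<forall>x y z. geq x y \<longrightarrow> geq (x + z) (y + z)) \<and>
     (\<forall>x y (c::real). geq x y \<and> c \<ge> 0 \<longrightarrow> geq (c *\<^sub>R x) (c *\<^sub>R y))"

definition positive_cone :: "('a::real_vector \<Rightarrow> 'a \<Rightarrow> bool) \<Rightarrow> 'a set" where
  "positive_cone geq = {x. geq x 0}"

definition topological_dual :: "('a::{real_vector,topological_space} \<Rightarrow> real) set" where
  "topological_dual = {\<phi>. linear \<phi> \<and> continuous_on UNIV \<phi>}"

definition polyhedral :: "'a::{real_vector,topological_space} set \<Rightarrow> bool" where
  "polyhedral S \<longleftrightarrow>
     (\<exists>F::(('a \<Rightarrow> real) \<times> real) set. finite F \<and> (\<forall>(\<phi>, \<alpha>)\<in>F. \<phi> \<in> topological_dual) \<and>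
        S = {x. \<forall>(\<phi>, \<alpha>)\<in>F. \<phi> x \<ge> \<alpha>})"

definition risk_measure :: "'a::real_vector set \<Rightarrow> 'a set \<Rightarrow> ('a \<Rightarrow> real) \<Rightarrow> 'a \<Rightarrow> ereal" where
  "risk_measure A M \<pi> X = Inf ((\<lambda>Z. ereal (\<pi> Z)) ` {Z \<in> M. X + Z \<in> A})"

definition optimal_payoffs :: "'a::real_vector set \<Rightarrow> 'a set \<Rightarrow> ('a \<Rightarrow> real) \<Rightarrow> 'a \<Rightarrow> 'a set" where
  "optimal_payoffs A M \<pi> X =
     {Z \<in> M. X + Z \<in> A \<and> ereal (\<pi> Z) = risk_measure A M \<pi> X}"

definition lsc_at :: "'a::topological_space set \<Rightarrow> ('a \<Rightarrow> 'a set) \<Rightarrow> 'a \<Rightarrow> bool" where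
  "lsc_at M R X \<longleftrightarrow>
     (\<forall>U. openin (top_of_set M) U \<and> R X \<inter> U \<noteq> {} \<longrightarrow>
        (\<exists>V. open V \<and> X \<in> V \<and> (\<forall>Y\<in>V. R Y \<inter> U \<noteq> {})))"

end

theory Submission
  imports Defs
begin

text \<open>Write A as a finite system of linear inequalities. Then the optimal payoffs at Y are the
  solutions z in M of a finite linear system whose right-hand sides depend continuously on Y, the
  budget constraint being \<pi> z \<le> \<rho>(Y). Fourier-Motzkin elimination of one coordinate of M at a
  time shows, by induction on the dimension, that such solution sets depend lower
  semicontinuously on the right-hand sides wherever they are nonempty; the same elimination shows
  that the infimum defining \<rho> is attained, so they are never empty.\<close>

lemma exists_between_finite_bounds:
  fixes L U :: "real set"
  assumes "finite L" "finite U" "\<forall>l\<in>L. \<forall>u\<in>U. l \<le> u"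
    and "\<forall>l\<in>L. l < x0 + d" "\<forall>u\<in>U. x0 - d < u" "0 < d"
  shows "\<exists>x. \<bar>x - x0\<bar> < d \<and> (\<forall>l\<in>L. l \<le> x) \<and> (\<forall>u\<in>U. x \<le> u)"
proof -
  define x1 where "x1 = (if L = {} then x0 else max x0 (Max L))"
  have x1_ge: "\<forall>l\<in>L. l \<le> x1" and x1_near: "x0 \<le> x1" "x1 < x0 + d"
    using assms(1,4,6) unfolding x1_def by (auto simp: le_max_iff_disj Max_in)
  define x where "x = (if U = {} then x1 else min x1 (Min U))"
  have "x0 - d < x"
    using assms(2,5,6) x1_near unfolding x_def by (auto simp: Min_in)
  moreover have "\<forall>l\<in>L. l \<le> x"
    using x1_ge assms(2,3) unfolding x_def by (auto simp: Min_in)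
  moreover have "\<forall>u\<in>U. x \<le> u"
    using assms(2) unfolding x_def by (auto simp: min_le_iff_disj)
  moreover have "x \<le> x1"
    unfolding x_def by auto
  ultimately show ?thesis
    using x1_near by (intro exI[of _ x]) auto
qed

lemma quotient_bounds_near:
  fixes a h h0 g g0 x0 \<eta> d :: real
  assumes "h0 \<le> g0 + x0 * a" "\<bar>h - h0\<bar> < \<eta>" "\<bar>g - g0\<bar> < \<eta>" "2 * \<eta> \<le> \<bar>a\<bar> * d"
  shows "0 < a \<Longrightarrow> (h - g) / a < x0 + d" and "a < 0 \<Longrightarrow> x0 - d < (h - g) / a"
proof -
  have "h - g < x0 * a + \<bar>a\<bar> * d"
    using assms by linarith
  then show "0 < a \<Longrightarrow> (h - g) / a < x0 + d" and "a < 0 \<Longrightarrow> x0 - d < (h - g) / a"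
    by (auto simp: divide_simps algebra_simps)
qed

definition feasible :: "(('a \<Rightarrow> real) \<times> ('p \<Rightarrow> real)) set \<Rightarrow> 'p \<Rightarrow> 'a \<Rightarrow> bool" where
  "feasible C p z \<longleftrightarrow> (\<forall>c\<in>C. snd c p \<le> fst c z)"

text \<open>Fourier-Motzkin elimination of the direction e: when fst c1 e > 0 > fst c2 e, this
  nonnegative combination of c1 and c2 has coefficient 0 on e.\<close>
definition fm_combine ::
    "'a \<Rightarrow> ('a \<Rightarrow> real) \<times> ('p \<Rightarrow> real) \<Rightarrow> ('a \<Rightarrow> real) \<times> ('p \<Rightarrow> real) \<Rightarrow> ('a \<Rightarrow> real) \<times> ('p \<Rightarrow> real)"
  where "fm_combine e c1 c2 =
    (\<lambda>z. - fst c2 e * fst c1 z + fst c1 e * fst c2 z, \<lambda>p. - fst c2 e * snd c1 p + fst c1 e * snd c2 p)"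

definition fm_eliminate ::
    "'a \<Rightarrow> (('a \<Rightarrow> real) \<times> ('p \<Rightarrow> real)) set \<Rightarrow> (('a \<Rightarrow> real) \<times> ('p \<Rightarrow> real)) set"
  where "fm_eliminate e C = {c\<in>C. fst c e = 0} \<union>
    (\<lambda>(c1, c2). fm_combine e c1 c2) ` ({c\<in>C. 0 < fst c e} \<times> {c\<in>C. fst c e < 0})"

lemma finite_fm_eliminate: "finite C \<Longrightarrow> finite (fm_eliminate e C)"
  unfolding fm_eliminate_def by auto

lemma fm_eliminate_cases:
  assumes "c \<in> fm_eliminate e C"
  obtains "c \<in> C" "fst c e = 0"
  | c1 c2 where "c1 \<in> C" "c2 \<in> C" "0 < fst c1 e" "fst c2 e < 0" "c = fm_combine e c1 c2"
  using assms unfolding fm_eliminate_def by auto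

lemma fm_eliminate_linear:
  assumes "\<forall>c\<in>C. linear (fst c)"
  shows "\<forall>c\<in>fm_eliminate e C. linear (fst c)"
proof
  fix c assume "c \<in> fm_eliminate e C"
  then show "linear (fst c)"
  proof (cases rule: fm_eliminate_cases)
    case (2 c1 c2)
    then have "linear (fst c1)" "linear (fst c2)"
      using assms by auto
    then show ?thesis
      unfolding 2 fm_combine_def by (simp add: linear_iff algebra_simps)
  qed (use assms in auto)
qed

lemma fm_eliminate_continuous:
  assumes "\<forall>c\<in>C. continuous_on UNIV (snd c)"
  shows "\<forall>c\<in>fm_eliminate e C. continuous_on UNIV (snd c)"
proof
  fix c assume "c \<in> fm_eliminate e C"
  then show "continuous_on UNIV (snd c)"
  proof (cases rule: fm_eliminate_cases)
    case (2 c1 c2)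
    then have "continuous_on UNIV (snd c1)" "continuous_on UNIV (snd c2)"
      using assms by auto
    then show ?thesis
      unfolding 2 fm_combine_def by (auto intro!: continuous_intros)
  qed (use assms in auto)
qed

lemma feasible_fm_eliminate:
  assumes lin: "\<forall>c\<in>C. linear (fst c)" and feas: "feasible C p (z + x *\<^sub>R e)"
  shows "feasible (fm_eliminate e C) p z"
  unfolding feasible_def
proof
  have ineq: "snd c p \<le> fst c z + x * fst c e" if "c \<in> C" for c
    using feas lin that unfolding feasible_def by (auto simp: linear_add linear_scale)
  fix c assume "c \<in> fm_eliminate e C"
  then show "snd c p \<le> fst c z"
  proof (cases rule: fm_eliminate_cases)
    case 1
    then show ?thesis
      using ineq[of c] by simp
  next
    case (2 c1 c2)
    have "- fst c2 e * snd c1 p \<le> - fst c2 e * (fst c1 z + x * fst c1 e)"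
      using ineq[of c1] 2 by (intro mult_left_mono) auto
    moreover have "fst c1 e * snd c2 p \<le> fst c1 e * (fst c2 z + x * fst c2 e)"
      using ineq[of c2] 2 by (intro mult_left_mono) auto
    ultimately show ?thesis
      unfolding 2 fm_combine_def by (simp add: algebra_simps)
  qed
qed

lemma fm_eliminate_lift:
  assumes fin: "finite C" and lin: "\<forall>c\<in>C. linear (fst c)"
    and feas: "feasible (fm_eliminate e C) p z" and d: "0 < d"
    and lower: "\<forall>c\<in>C. 0 < fst c e \<longrightarrow> (snd c p - fst c z) / fst c e < x0 + d"
    and upper: "\<forall>c\<in>C. fst c e < 0 \<longrightarrow> x0 - d < (snd c p - fst c z) / fst c e"
  shows "\<exists>x. \<bar>x - x0\<bar> < d \<and> feasible C p (z + x *\<^sub>R e)"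
proof -
  define q :: "_ \<Rightarrow> real" where "q c = (snd c p - fst c z) / fst c e" for c
  have lin_at: "fst c (z + x *\<^sub>R e) = fst c z + x * fst c e" if "c \<in> C" for c x
    using lin that by (auto simp: linear_add linear_scale)
  have q_le: "q c1 \<le> q c2" if "c1 \<in> C" "c2 \<in> C" "0 < fst c1 e" "fst c2 e < 0" for c1 c2
  proof -
    have "fm_combine e c1 c2 \<in> fm_eliminate e C"
      using that unfolding fm_eliminate_def by force
    then have "- fst c2 e * snd c1 p + fst c1 e * snd c2 p \<le> - fst c2 e * fst c1 z + fst c1 e * fst c2 z"
      using feas unfolding feasible_def fm_combine_def by fastforce
    then show ?thesis
      using that unfolding q_def by (simp add: divide_simps algebra_simps)
  qed
  obtain x where x: "\<bar>x - x0\<bar> < d" "\<forall>c\<in>C. 0 < fst c e \<longrightarrow> q c \<le> x" "\<forall>c\<in>C. fst c e < 0 \<longrightarrow> x \<le> q c"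
    using exists_between_finite_bounds[of "q ` {c\<in>C. 0 < fst c e}" "q ` {c\<in>C. fst c e < 0}" x0 d]
      fin q_le lower upper d unfolding q_def by auto
  have "snd c p \<le> fst c (z + x *\<^sub>R e)" if c: "c \<in> C" for c
  proof (cases "fst c e = 0")
    case True
    then have "c \<in> fm_eliminate e C"
      using c unfolding fm_eliminate_def by auto
    then show ?thesis
      using feas lin_at[OF c] True unfolding feasible_def by auto
  next
    case False
    then show ?thesis
      using x c lin_at[OF c] unfolding q_def by (auto simp: divide_simps algebra_simps linorder_neq_iff)
  qed
  then show ?thesis
    using x(1) unfolding feasible_def by blast
qed

lemma fm_eliminate_lift_exists:
  assumes "finite C" "\<forall>c\<in>C. linear (fst c)" "feasible (fm_eliminate e C) p z"
  shows "\<exists>x. feasible C p (z + x *\<^sub>R e)"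
proof -
  define q :: "_ \<Rightarrow> real" where "q c = (snd c p - fst c z) / fst c e" for c
  obtain b where "\<forall>y\<in>q ` C. \<bar>y\<bar> \<le> b"
    using assms(1) bounded_real finite_imp_bounded by blast
  then have "\<forall>c\<in>C. - (\<bar>b\<bar> + 1) < q c \<and> q c < \<bar>b\<bar> + 1"
    by fastforce
  moreover have "0 < \<bar>b\<bar> + 1"
    by (simp add: add_nonneg_pos)
  ultimately show ?thesis
    using fm_eliminate_lift[OF assms, of "\<bar>b\<bar> + 1" 0] unfolding q_def by auto
qed

lemma ex_feasible_span_insert:
  assumes "finite C" "\<forall>c\<in>C. linear (fst c)"
  shows "(\<exists>z\<in>span (insert e B). feasible C p z) \<longleftrightarrow> (\<exists>z\<in>span B. feasible (fm_eliminate e C) p z)"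
proof
  assume "\<exists>z\<in>span (insert e B). feasible C p z"
  then obtain z x where "z - x *\<^sub>R e \<in> span B" "feasible C p z"
    by (meson span_breakdown_eq)
  then show "\<exists>z\<in>span B. feasible (fm_eliminate e C) p z"
    using feasible_fm_eliminate[of C p "z - x *\<^sub>R e" x e] assms(2) by auto
next
  assume "\<exists>z\<in>span B. feasible (fm_eliminate e C) p z"
  then obtain z x where "z \<in> span B" "feasible C p (z + x *\<^sub>R e)"
    using fm_eliminate_lift_exists[OF assms] by blast
  then show "\<exists>z\<in>span (insert e B). feasible C p z"
    by (intro bexI[of _ "z + x *\<^sub>R e"]) (auto simp: span_breakdown_eq intro: exI[of _ x])
qed

lemma closed_feasible_parameters:
  fixes C :: "(('a::real_vector \<Rightarrow> real) \<times> ('p::topological_space \<Rightarrow> real)) set"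
  assumes "finite B" "finite C" "\<forall>c\<in>C. linear (fst c)" "\<forall>c\<in>C. continuous_on UNIV (snd c)"
  shows "closed {p. \<exists>z\<in>span B. feasible C p z}"
  using assms
proof (induction B arbitrary: C rule: finite_induct)
  case empty
  have "{p. \<exists>z\<in>span {}. feasible C p z} = (\<Inter>c\<in>C. {p. snd c p \<le> fst c 0})"
    unfolding feasible_def by auto
  then show ?case
    using empty.prems by (auto intro!: closed_INT closed_Collect_le continuous_intros)
next
  case (insert e B)
  then show ?case
    by (simp add: ex_feasible_span_insert finite_fm_eliminate fm_eliminate_linear fm_eliminate_continuous)
qed

lemma fm_eliminate_lift_near:
  assumes fin: "finite C" and lin: "\<forall>c\<in>C. linear (fst c)"
    and feas0: "feasible C p0 (z0 + x0 *\<^sub>R e)" and feas: "feasible (fm_eliminate e C) p z"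
    and m: "\<forall>c\<in>C. fst c e \<noteq> 0 \<longrightarrow> m \<le> \<bar>fst c e\<bar>" and d: "0 < d"
    and near_p: "\<forall>c\<in>C. \<bar>snd c p - snd c p0\<bar> < m * d / 2"
    and near_z: "\<forall>c\<in>C. \<bar>fst c z - fst c z0\<bar> < m * d / 2"
  shows "\<exists>x. \<bar>x - x0\<bar> < d \<and> feasible C p (z + x *\<^sub>R e)"
proof -
  have "(0 < fst c e \<longrightarrow> (snd c p - fst c z) / fst c e < x0 + d) \<and>
        (fst c e < 0 \<longrightarrow> x0 - d < (snd c p - fst c z) / fst c e)" if c: "c \<in> C" for c
  proof -
    have "snd c p0 \<le> fst c z0 + x0 * fst c e"
      using feas0 lin c unfolding feasible_def by (auto simp: linear_add linear_scale)
    moreover have "2 * (m * d / 2) \<le> \<bar>fst c e\<bar> * d" if "fst c e \<noteq> 0"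
      using m c d that by simp
    ultimately show ?thesis
      using quotient_bounds_near[of "snd c p0" "fst c z0" x0 "fst c e" "snd c p" "m * d / 2" "fst c z" d]
        near_p near_z c by auto
  qed
  then show ?thesis
    using fm_eliminate_lift[OF fin lin feas d] by blast
qed

lemma add_scaleR_open_nbhd:
  fixes e :: "'a::{real_vector,topological_space}"
  assumes cont: "continuous_on UNIV (\<lambda>w::'a \<times> real. fst w + snd w *\<^sub>R e)"
    and W: "open W" "z0 + x0 *\<^sub>R e \<in> W"
  obtains W' d where "open W'" "z0 \<in> W'" "0 < d" "\<And>z x. z \<in> W' \<Longrightarrow> \<bar>x - x0\<bar> < d \<Longrightarrow> z + x *\<^sub>R e \<in> W"
proof -
  have "open ((\<lambda>w::'a \<times> real. fst w + snd w *\<^sub>R e) -` W)" "(z0, x0) \<in> (\<lambda>w. fst w + snd w *\<^sub>R e) -` W"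
    using open_vimage[OF W(1) cont] W(2) by auto
  then obtain W' I where W'I: "open W'" "open I" "(z0, x0) \<in> W' \<times> I"
      "W' \<times> I \<subseteq> (\<lambda>w::'a \<times> real. fst w + snd w *\<^sub>R e) -` W"
    by (rule open_prod_elim)
  obtain d where "0 < d" "ball x0 d \<subseteq> I"
    using W'I(2,3) openE by blast
  have reach: "z + x *\<^sub>R e \<in> W" if "z \<in> W'" "\<bar>x - x0\<bar> < d" for z x
  proof -
    have "x \<in> I"
      using \<open>ball x0 d \<subseteq> I\<close> that(2) by (auto simp: dist_real_def abs_minus_commute)
    then have "(z, x) \<in> W' \<times> I"
      using that(1) by simp
    then show ?thesis
      using W'I(4) by auto
  qed
  show ?thesis
    using W'I(3) by (intro that[OF W'I(1) _ \<open>0 < d\<close> reach]) auto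
qed

lemma eventually_ball_finite_near:
  fixes f :: "'c \<Rightarrow> 'p::topological_space \<Rightarrow> real"
  assumes "finite C" "\<forall>c\<in>C. continuous_on UNIV (f c)" "0 < \<eta>"
  shows "eventually (\<lambda>p. \<forall>c\<in>C. \<bar>f c p - f c p0\<bar> < \<eta>) (nhds p0)"
proof -
  have "(f c \<longlongrightarrow> f c p0) (nhds p0)" if "c \<in> C" for c
    using assms(2) that by (simp add: continuous_on_def tendsto_at_iff_tendsto_nhds)
  then show ?thesis
    using assms(1,3) unfolding tendsto_iff dist_real_def by (simp add: eventually_ball_finite)
qed

lemma linear_add_scaleR_near:
  assumes "linear k" "\<bar>k z - k z0\<bar> < \<epsilon> / 2" "\<bar>x - x0\<bar> * \<bar>k e\<bar> \<le> \<epsilon> / 2"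
  shows "\<bar>k (z + x *\<^sub>R e) - k (z0 + x0 *\<^sub>R e)\<bar> < \<epsilon>"
proof -
  have "k (z + x *\<^sub>R e) - k (z0 + x0 *\<^sub>R e) = (k z - k z0) + (x - x0) * k e"
    using assms(1) by (simp add: linear_add linear_scale algebra_simps)
  then show ?thesis
    using assms(2,3) abs_triangle_ineq[of "k z - k z0" "(x - x0) * k e"] by (simp add: abs_mult)
qed

text \<open>The forms in K are carried along the induction because one dimension up the
  eliminated constraints must stay uniformly close to their values at z0; that is what confines
  the lift of the new coordinate to a small interval around that of z0.\<close>
lemma eventually_feasible_near:
  fixes p0 :: "'p::topological_space"
    and C :: "(('a::{real_vector,topological_space} \<Rightarrow> real) \<times> ('p \<Rightarrow> real)) set"
    and K :: "('a \<Rightarrow> real) set"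
  assumes cont: "\<And>e. continuous_on UNIV (\<lambda>w::'a \<times> real. fst w + snd w *\<^sub>R e)"
    and "finite B" "finite C" "\<forall>c\<in>C. linear (fst c)" "\<forall>c\<in>C. continuous_on UNIV (snd c)"
    and "finite K" "\<forall>k\<in>K. linear k"
    and "z0 \<in> span B" "feasible C p0 z0" "open W" "z0 \<in> W" "0 < \<epsilon>"
  shows "eventually (\<lambda>p. (\<exists>z\<in>span B. feasible C p z) \<longrightarrow>
           (\<exists>z\<in>span B. z \<in> W \<and> feasible C p z \<and> (\<forall>k\<in>K. \<bar>k z - k z0\<bar> < \<epsilon>))) (nhds p0)"
  using assms(2-)
proof (induction B arbitrary: C K z0 W \<epsilon> rule: finite_induct)
  case empty
  then have "z0 = 0"
    by simp
  then show ?case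
    using empty.prems by (intro always_eventually) auto
next
  case (insert e B)
  note finC = \<open>finite C\<close> and linC = \<open>\<forall>c\<in>C. linear (fst c)\<close>
    and contC = \<open>\<forall>c\<in>C. continuous_on UNIV (snd c)\<close> and linK = \<open>\<forall>k\<in>K. linear k\<close>
  obtain x0 where "z0 - x0 *\<^sub>R e \<in> span B"
    using \<open>z0 \<in> span (insert e B)\<close> span_breakdown_eq by blast
  define z0' where "z0' = z0 - x0 *\<^sub>R e"
  have z0': "z0' \<in> span B" and z0_eq: "z0 = z0' + x0 *\<^sub>R e"
    using \<open>z0 - x0 *\<^sub>R e \<in> span B\<close> unfolding z0'_def by auto
  have feas0: "feasible C p0 (z0' + x0 *\<^sub>R e)"
    using insert.prems z0_eq by simp
  obtain W' d0 where W': "open W'" "z0' \<in> W'" "0 < d0"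
      "\<And>z x. z \<in> W' \<Longrightarrow> \<bar>x - x0\<bar> < d0 \<Longrightarrow> z + x *\<^sub>R e \<in> W"
    by (rule add_scaleR_open_nbhd[OF cont \<open>open W\<close>, of z0' x0]) (use insert.prems z0_eq in auto)
  obtain m where m: "0 < m" "\<forall>c\<in>C. fst c e \<noteq> 0 \<longrightarrow> m \<le> \<bar>fst c e\<bar>"
    using finite_set_avoid[of "(\<lambda>c. fst c e) ` C" 0] finC by (auto simp: dist_real_def)
  obtain b where b: "\<forall>k\<in>K. \<bar>k e\<bar> \<le> b"
    using bounded_real finite_imp_bounded[of "(\<lambda>k. k e) ` K"] \<open>finite K\<close> by auto
  define d where "d = min d0 (\<epsilon> / (2 * (1 + \<bar>b\<bar>)))"
  define \<eta> where "\<eta> = min (\<epsilon> / 2) (m * d / 2)"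
  have d: "0 < d" "d \<le> d0" "d * \<bar>b\<bar> < \<epsilon> / 2"
    using W'(3) \<open>0 < \<epsilon>\<close> unfolding d_def by (auto simp: min_def field_simps)
  have "0 < \<eta>"
    using d m \<open>0 < \<epsilon>\<close> unfolding \<eta>_def by simp
  have ev_p: "eventually (\<lambda>p. \<forall>c\<in>C. \<bar>snd c p - snd c p0\<bar> < m * d / 2) (nhds p0)"
    using d(1) m(1) by (intro eventually_ball_finite_near[OF finC contC]) simp
  have "\<forall>k\<in>K \<union> fst ` C. linear k"
    using linK linC by auto
  then have ev_z: "eventually (\<lambda>p. (\<exists>z\<in>span B. feasible (fm_eliminate e C) p z) \<longrightarrow>
      (\<exists>z\<in>span B. z \<in> W' \<and> feasible (fm_eliminate e C) p z \<and> (\<forall>k\<in>K \<union> fst ` C. \<bar>k z - k z0'\<bar> < \<eta>))) (nhds p0)"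
    using insert.IH[of "fm_eliminate e C" "K \<union> fst ` C" z0' W' \<eta>] insert.prems z0' W' \<open>0 < \<eta>\<close>
      feasible_fm_eliminate[OF linC feas0]
    by (simp add: finite_fm_eliminate fm_eliminate_linear fm_eliminate_continuous)
  show ?case
    using ev_p ev_z
  proof eventually_elim
    case (elim p)
    show ?case
    proof
      assume "\<exists>z\<in>span (insert e B). feasible C p z"
      then have "\<exists>z\<in>span B. feasible (fm_eliminate e C) p z"
        using ex_feasible_span_insert[OF finC linC] by blast
      then obtain z where z: "z \<in> span B" "z \<in> W'" "feasible (fm_eliminate e C) p z"
          and z_near: "\<forall>k\<in>K \<union> fst ` C. \<bar>k z - k z0'\<bar> < \<eta>"
        using elim(2) by blast
      have "\<forall>c\<in>C. \<bar>fst c z - fst c z0'\<bar> < m * d / 2"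
        using z_near unfolding \<eta>_def by auto
      then obtain x where x: "\<bar>x - x0\<bar> < d" "feasible C p (z + x *\<^sub>R e)"
        using fm_eliminate_lift_near[OF finC linC feas0 z(3) m(2) d(1)] elim(1) by blast
      have "\<bar>k (z + x *\<^sub>R e) - k z0\<bar> < \<epsilon>" if k: "k \<in> K" for k
      proof -
        have "\<bar>x - x0\<bar> * \<bar>k e\<bar> \<le> d * \<bar>b\<bar>"
          using x(1) b k by (intro mult_mono) auto
        moreover have "\<bar>k z - k z0'\<bar> < \<epsilon> / 2"
          using z_near k unfolding \<eta>_def by auto
        ultimately show ?thesis
          unfolding z0_eq using linear_add_scaleR_near linK k d(3) by fastforce
      qed
      moreover have "z + x *\<^sub>R e \<in> span (insert e B)"
        using z(1) by (auto simp: span_breakdown_eq intro: exI[of _ x])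
      moreover have "z + x *\<^sub>R e \<in> W"
        using W'(4) z(2) x(1) d(2) by simp
      ultimately show "\<exists>z\<in>span (insert e B). z \<in> W \<and> feasible C p z \<and> (\<forall>k\<in>K. \<bar>k z - k z0\<bar> < \<epsilon>)"
        using x(2) by blast
    qed
  qed
qed

lemma linear_extension_from_subspace:
  fixes f :: "'a::real_vector \<Rightarrow> real"
  assumes M: "subspace M"
    and add: "\<forall>x\<in>M. \<forall>y\<in>M. f (x + y) = f x + f y" and scale: "\<forall>c. \<forall>x\<in>M. f (c *\<^sub>R x) = c * f x"
  obtains g where "linear g" "\<forall>x\<in>M. g x = f x"
proof -
  obtain E where E: "E \<subseteq> M" "independent E" "M \<subseteq> span E"
    by (rule basis_exists)
  obtain g where g: "linear g" "\<forall>x\<in>E. g x = f x"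
    using linear_independent_extend[OF E(2)] by blast
  have "x \<in> M \<and> g x = f x" if "x \<in> span E" for x
    using that
  proof (induction rule: span_induct_alt)
    case base
    have "f 0 = 0"
      using scale M subspace_0[OF M] by (metis mult_zero_left scaleR_zero_left)
    then show ?case
      using M g(1) by (simp add: subspace_0 linear_0)
  next
    case (step c x y)
    then show ?case
      using E(1) M g add scale by (auto simp: subspace_add subspace_scale linear_add linear_scale)
  qed
  then show ?thesis
    using that g(1) E(3) by blast
qed

lemma lsc_atI:
  assumes "\<forall>Y. R Y \<subseteq> M"
    and "\<And>z0 W. z0 \<in> R X \<Longrightarrow> open W \<Longrightarrow> z0 \<in> W \<Longrightarrow> eventually (\<lambda>Y. R Y \<inter> W \<noteq> {}) (nhds X)"
  shows "lsc_at M R X"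
  unfolding lsc_at_def
proof (intro allI impI, elim conjE)
  fix U assume "openin (top_of_set M) U" "R X \<inter> U \<noteq> {}"
  then obtain W z0 where W: "open W" "U = M \<inter> W" and "z0 \<in> R X" "z0 \<in> W"
    by (auto simp: openin_open)
  then have "eventually (\<lambda>Y. R Y \<inter> W \<noteq> {}) (nhds X)"
    using assms(2) by blast
  moreover have "R Y \<inter> U = R Y \<inter> W" for Y
    using assms(1) W(2) by blast
  ultimately have "eventually (\<lambda>Y. R Y \<inter> U \<noteq> {}) (nhds X)"
    by simp
  then show "\<exists>V. open V \<and> X \<in> V \<and> (\<forall>Y\<in>V. R Y \<inter> U \<noteq> {})"
    unfolding eventually_nhds by blast
qed

lemma optimal_payoffs_iff:
  assumes "risk_measure A M \<pi> Y = ereal r"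
  shows "z \<in> optimal_payoffs A M \<pi> Y \<longleftrightarrow> z \<in> M \<and> Y + z \<in> A \<and> \<pi> z \<le> r"
proof -
  have "r \<le> \<pi> z" if "z \<in> M" "Y + z \<in> A"
    using assms that Inf_lower[of "ereal (\<pi> z)" "(\<lambda>Z. ereal (\<pi> Z)) ` {Z \<in> M. Y + Z \<in> A}"]
    unfolding risk_measure_def by auto
  then show ?thesis
    using assms unfolding optimal_payoffs_def by force
qed

definition budget_constraints ::
    "(('a \<Rightarrow> real) \<times> real) set \<Rightarrow> ('a \<Rightarrow> real) \<Rightarrow> ('p \<Rightarrow> 'a) \<Rightarrow> ('p \<Rightarrow> real) \<Rightarrow> (('a \<Rightarrow> real) \<times> ('p \<Rightarrow> real)) set"
  where "budget_constraints F g X t = (\<lambda>(\<phi>, \<alpha>). (\<phi>, \<lambda>p. \<alpha> - \<phi> (X p))) ` F \<union> {(\<lambda>z. - g z, \<lambda>p. - t p)}"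

lemma feasible_budget_constraints:
  fixes F :: "(('a::real_vector \<Rightarrow> real) \<times> real) set"
  assumes "A = {x. \<forall>(\<phi>, \<alpha>)\<in>F. \<alpha> \<le> \<phi> x}" "\<forall>(\<phi>, \<alpha>)\<in>F. linear \<phi>"
  shows "feasible (budget_constraints F g X t) p z \<longleftrightarrow> X p + z \<in> A \<and> g z \<le> t p"
  using assms unfolding feasible_def budget_constraints_def by (force simp: linear_add)

lemma budget_constraints_regular:
  fixes F :: "(('a::real_vector \<Rightarrow> real) \<times> real) set" and X :: "'p::topological_space \<Rightarrow> 'a"
  assumes "finite F" "\<forall>(\<phi>, \<alpha>)\<in>F. linear \<phi> \<and> continuous_on UNIV (\<lambda>p. \<phi> (X p))"
    and "linear g" "continuous_on UNIV t"
  shows "finite (budget_constraints F g X t)"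
    and "\<forall>c\<in>budget_constraints F g X t. linear (fst c)"
    and "\<forall>c\<in>budget_constraints F g X t. continuous_on UNIV (snd c)"
  using assms unfolding budget_constraints_def
  by (auto intro!: continuous_intros simp: linear_compose_neg)

lemma risk_measure_attained:
  fixes F :: "(('a::real_vector \<Rightarrow> real) \<times> real) set"
  assumes AF: "A = {x. \<forall>(\<phi>, \<alpha>)\<in>F. \<alpha> \<le> \<phi> x}" and F: "finite F" "\<forall>(\<phi>, \<alpha>)\<in>F. linear \<phi>"
    and "finite B" and g: "linear g" "\<forall>z\<in>span B. g z = \<pi> z"
    and \<rho>: "risk_measure A (span B) \<pi> Y = ereal r"
  shows "\<exists>z\<in>span B. Y + z \<in> A \<and> \<pi> z \<le> r"
proof -
  define C where "C = budget_constraints F g (\<lambda>_::real. Y) id"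
  have feas: "feasible C t z \<longleftrightarrow> Y + z \<in> A \<and> g z \<le> t" for t z
    unfolding C_def using feasible_budget_constraints[OF AF F(2), of g "\<lambda>_. Y" id] by simp
  have "closed {t. \<exists>z\<in>span B. feasible C t z}"
    unfolding C_def using budget_constraints_regular[of F "\<lambda>_. Y" g id] F g
    by (intro closed_feasible_parameters \<open>finite B\<close>) (auto simp: case_prod_unfold)
  moreover have "\<exists>t\<in>{t. \<exists>z\<in>span B. feasible C t z}. dist t r < \<epsilon>" if "0 < \<epsilon>" for \<epsilon>
  proof -
    have "Inf ((\<lambda>Z. ereal (\<pi> Z)) ` {Z \<in> span B. Y + Z \<in> A}) < ereal (r + \<epsilon> / 2)"
      using \<rho> that unfolding risk_measure_def by simp
    then obtain z where "z \<in> span B" "Y + z \<in> A" "\<pi> z < r + \<epsilon> / 2"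
      unfolding Inf_less_iff by auto
    then show ?thesis
      using feas g(2) that by (intro bexI[of _ "r + \<epsilon> / 2"]) (auto simp: dist_real_def)
  qed
  ultimately have "r \<in> {t. \<exists>z\<in>span B. feasible C t z}"
    using closed_approachable by blast
  then show ?thesis
    using feas g(2) by auto
qed

lemma continuous_add_scaleR_tvs:
  assumes "locally_convex_tvs TYPE('a::{real_vector,topological_space})"
  shows "continuous_on UNIV (\<lambda>w::'a \<times> real. fst w + snd w *\<^sub>R e)"
proof -
  have add: "continuous_on UNIV (\<lambda>p::'a \<times> 'a. fst p + snd p)"
    and scale: "continuous_on UNIV (\<lambda>p::real \<times> 'a. fst p *\<^sub>R snd p)"
    using assms unfolding locally_convex_tvs_def by auto
  have "continuous_on UNIV ((\<lambda>p::real \<times> 'a. fst p *\<^sub>R snd p) \<circ> (\<lambda>w::'a \<times> real. (snd w, e)))"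
    by (intro continuous_on_compose continuous_on_subset[OF scale] continuous_intros) auto
  then have "continuous_on UNIV ((\<lambda>p::'a \<times> 'a. fst p + snd p) \<circ> (\<lambda>w::'a \<times> real. (fst w, snd w *\<^sub>R e)))"
    by (intro continuous_on_compose continuous_on_subset[OF add] continuous_intros) (auto simp: o_def)
  then show ?thesis
    by (simp add: o_def)
qed

theorem mainTheorem1:
  fixes geq :: "'a::{real_vector, t2_space, first_countable_topology} \<Rightarrow> 'a \<Rightarrow> bool"
    and M :: "'a set" and \<pi> :: "'a \<Rightarrow> real" and A :: "'a set"
  assumes tvs: "locally_convex_tvs TYPE('a)"
    and ord: "vector_partial_order geq"
    and M_sub: "subspace M"
    and M_fin: "\<exists>B. finite B \<and> M = span B"
    and M_dim: "1 < dim M"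
    and \<pi>_lin: "\<forall>x\<in>M. \<forall>y\<in>M. \<pi> (x + y) = \<pi> x + \<pi> y"
    and \<pi>_hom: "\<forall>c. \<forall>x\<in>M. \<pi> (c *\<^sub>R x) = c * \<pi> x"
    and A1: "\<exists>U\<in>M \<inter> positive_cone geq. \<pi> U = 1"
    and A2_closed: "closed A" and A2_zero: "0 \<in> A" and A2_proper: "A \<noteq> UNIV"
    and A2_mono: "\<forall>x\<in>A. \<forall>p\<in>positive_cone geq. x + p \<in> A"
    and A3_finite: "\<forall>X. risk_measure A M \<pi> X \<noteq> \<infinity> \<and> risk_measure A M \<pi> X \<noteq> -\<infinity>"
    and A3_cont: "continuous_on UNIV (\<lambda>X. real_of_ereal (risk_measure A M \<pi> X))"
    and poly: "polyhedral A"
  shows "\<forall>X. lsc_at M (optimal_payoffs A M \<pi>) X"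
proof -
  obtain F :: "(('a \<Rightarrow> real) \<times> real) set" where F: "finite F" "\<forall>(\<phi>, \<alpha>)\<in>F. linear \<phi>"
      "\<forall>(\<phi>, \<alpha>)\<in>F. continuous_on UNIV \<phi>" and AF: "A = {x. \<forall>(\<phi>, \<alpha>)\<in>F. \<alpha> \<le> \<phi> x}"
    using poly unfolding polyhedral_def topological_dual_def by fastforce
  obtain B where B: "finite B" "M = span B"
    using M_fin by blast
  obtain g where g: "linear g" "\<forall>z\<in>M. g z = \<pi> z"
    using linear_extension_from_subspace[OF M_sub \<pi>_lin \<pi>_hom] by blast
  define r where "r X = real_of_ereal (risk_measure A M \<pi> X)" for X
  have \<rho>: "risk_measure A M \<pi> X = ereal (r X)" for X
    using A3_finite unfolding r_def by (cases "risk_measure A M \<pi> X") auto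
  define C where "C = budget_constraints F g id r"
  note C_regular = budget_constraints_regular[of F id g r, folded C_def]
  have R_iff: "z \<in> optimal_payoffs A M \<pi> X \<longleftrightarrow> z \<in> span B \<and> feasible C X z" for X z
    using optimal_payoffs_iff[OF \<rho>] feasible_budget_constraints[OF AF F(2), of g id r X z] g(2) B(2)
    unfolding C_def by auto
  have R_nonempty: "\<exists>z\<in>span B. feasible C X z" for X
    using risk_measure_attained[OF AF F(1) _ B(1) g(1), of \<pi> X "r X"] \<rho> F(2) g(2) B R_iff
      optimal_payoffs_iff[OF \<rho>] by fastforce
  show ?thesis
  proof (intro allI lsc_atI)
    fix X z0 W assume "z0 \<in> optimal_payoffs A M \<pi> X" "open W" "z0 \<in> W"
    then have "eventually (\<lambda>Y. \<exists>z\<in>span B. z \<in> W \<and> feasible C Y z) (nhds X)"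
      using eventually_feasible_near[OF continuous_add_scaleR_tvs[OF tvs] B(1) C_regular, of "{}" z0 X W 1]
        F g(1) A3_cont R_iff R_nonempty by (auto simp: r_def case_prod_unfold elim: eventually_mono)
    then show "eventually (\<lambda>Y. optimal_payoffs A M \<pi> Y \<inter> W \<noteq> {}) (nhds X)"
      using R_iff by (auto elim!: eventually_mono)
  qed (auto simp: optimal_payoffs_def)
qed

end
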